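(* Let $G$ be a finite simple graph and let $c>0$ and $t>0$ be constants with $t\le c\,\frac{\epsilon(G)}{|G|}$. Then $$Ldyn_t(G)<\frac{c}{c+1}|G|.$$
   Context: For a graph $G$, $|G|$ is its number of vertices and $\epsilon(G)=|E(G)|/|G|$. A threshold assignment is a function $\tau:V(G)\to\{0,1,2,\dots\}$ with $\tau(v)\le deg_G(v)$ for every $v$; its average is $\overline{\tau}=\sum_v\tau(v)/|G|$. A set $D\subseteq V(G)$ is a $\tau$-dynamo if $V(G)$ can be partitioned into $D_0=D,D_1,\dots,D_k$ such that for each $1\le i\le k$, $D_i$ consists of all vertices not in $D_0\cup\dots\cup D_{i-1}$ having at least $\tau(v)$ neighbors in $D_0\cup\dots\cup D_{i-1}$; $dyn_\tau(G)$ is the minimum size of a $\tau$-dynamo. $Ldyn_t(G)=\max\{dyn_\tau(G):\overline{\tau}\le t\}$. *)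

theory Defs
  imports Complex_Main
begin

definition simple_graph :: "'a set \<Rightarrow> 'a set set \<Rightarrow> bool" where
  "simple_graph V E \<longleftrightarrow> finite V \<and>
     (\<forall>e\<in>E. \<exists>u v. u \<in> V \<and> v \<in> V \<and> u \<noteq> v \<and> e = {u, v})"

definition nbrs :: "'a set \<Rightarrow> 'a set set \<Rightarrow> 'a \<Rightarrow> 'a set" where
  "nbrs V E v = {u \<in> V. {u, v} \<in> E}"

definition deg :: "'a set \<Rightarrow> 'a set set \<Rightarrow> 'a \<Rightarrow> nat" where
  "deg V E v = card (nbrs V E v)"

definition eps :: "'a set \<Rightarrow> 'a set set \<Rightarrow> real" where
  "eps V E = real (card E) / real (card V)"

text \<open>Cumulative sets D_0 \<union> ... \<union> D_i of the activation process started from D.\<close>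
fun activated :: "'a set \<Rightarrow> 'a set set \<Rightarrow> ('a \<Rightarrow> nat) \<Rightarrow> 'a set \<Rightarrow> nat \<Rightarrow> 'a set" where
  "activated V E \<tau> D 0 = D"
| "activated V E \<tau> D (Suc i) =
     activated V E \<tau> D i \<union>
     {v \<in> V - activated V E \<tau> D i. card (nbrs V E v \<inter> activated V E \<tau> D i) \<ge> \<tau> v}"

definition is_dynamo :: "'a set \<Rightarrow> 'a set set \<Rightarrow> ('a \<Rightarrow> nat) \<Rightarrow> 'a set \<Rightarrow> bool" where
  "is_dynamo V E \<tau> D \<longleftrightarrow> D \<subseteq> V \<and> (\<exists>k. activated V E \<tau> D k = V)"

definition dyn :: "'a set \<Rightarrow> 'a set set \<Rightarrow> ('a \<Rightarrow> nat) \<Rightarrow> nat" where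
  "dyn V E \<tau> = Min {card D | D. is_dynamo V E \<tau> D}"

definition Ldyn :: "'a set \<Rightarrow> 'a set set \<Rightarrow> real \<Rightarrow> nat" where
  "Ldyn V E t = Max {dyn V E \<tau> | \<tau>. (\<forall>v\<in>V. \<tau> v \<le> deg V E v) \<and>
                      (\<Sum>v\<in>V. real (\<tau> v)) / real (card V) \<le> t}"

end

theory Submission
  imports Defs
begin

text \<open>Give vertex u the weight min(\<tau> u, d u + 1) / (d u + 1) and call the total weight the
  potential. Deleting a suitable vertex w lowers the potential by at least 1 when w cannot be
  activated by all its neighbours (\<tau> w > d w), and by at least 0 otherwise: summed over all w,
  the drops equal the number of such vertices by double counting over edges. Induction on |V|
  thus yields a dynamo of size at most the potential. When \<tau> \<le> d this is
  \<Sum> \<tau> v / (d v + 1) \<le> \<Sum> \<tau> v / (\<tau> v + 1), and the tangent line of the concave map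
  x \<mapsto> x / (x + 1) at c bounds it by c/(c+1) |G| + (\<Sum> \<tau> - c |G|)/(c+1)^2. Finally
  \<Sum> \<tau> \<le> t |G| \<le> c \<epsilon>(G) < c |G|.\<close>

lemma activated_subset: "D \<subseteq> V \<Longrightarrow> activated V E \<tau> D k \<subseteq> V"
  by (induction k) auto

lemma activated_mono: "k \<le> l \<Longrightarrow> activated V E \<tau> D k \<subseteq> activated V E \<tau> D l"
proof (induction l)
  case (Suc l)
  then show ?case by (cases "k = Suc l") auto
qed simp

lemma activated_mono_graph:
  assumes "finite V2" "V1 \<subseteq> V2" "D1 \<subseteq> D2"
  shows "activated V1 E \<tau> D1 k \<subseteq> activated V2 E \<tau> D2 k"
proof (induction k)
  case 0
  then show ?case using assms by simp
next
  case (Suc k)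
  have card_le: "card (nbrs V1 E v \<inter> activated V1 E \<tau> D1 k) \<le> card (nbrs V2 E v \<inter> activated V2 E \<tau> D2 k)"
    for v
    using Suc assms by (intro card_mono) (auto simp: nbrs_def)
  show ?case
  proof
    fix v
    assume "v \<in> activated V1 E \<tau> D1 (Suc k)"
    then consider "v \<in> activated V1 E \<tau> D1 k"
      | "v \<in> V1" "\<tau> v \<le> card (nbrs V1 E v \<inter> activated V1 E \<tau> D1 k)"
      by auto
    then show "v \<in> activated V2 E \<tau> D2 (Suc k)"
    proof cases
      case 1
      then show ?thesis using Suc by auto
    next
      case 2
      then have "v \<in> V2" "\<tau> v \<le> card (nbrs V2 E v \<inter> activated V2 E \<tau> D2 k)"
        using assms(2) card_le[of v] by auto
      then show ?thesis by auto
    qed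
  qed
qed

lemma activated_Diff_singleton:
  assumes "finite V" "activated (V - {w}) E \<tau> D k = V - {w}" "D \<subseteq> D'"
  shows "V - {w} \<subseteq> activated V E \<tau> D' k"
  using activated_mono_graph[OF assms(1), of "V - {w}" D D' E \<tau> k] assms(2,3) by auto

lemma is_dynamo_insert_Diff:
  assumes "finite V" "w \<in> V" "is_dynamo (V - {w}) E \<tau> D"
  shows "is_dynamo V E \<tau> (insert w D)"
proof -
  obtain k where k: "activated (V - {w}) E \<tau> D k = V - {w}" and D: "D \<subseteq> V - {w}"
    using assms(3) by (auto simp: is_dynamo_def)
  have "w \<in> activated V E \<tau> (insert w D) k"
    using activated_mono[of 0 k V E \<tau> "insert w D"] by auto
  moreover have "activated V E \<tau> (insert w D) k \<subseteq> V"
    using activated_subset[of "insert w D" V] D assms(2) by auto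
  ultimately show ?thesis
    using activated_Diff_singleton[OF assms(1) k, of "insert w D"] D assms(2)
    unfolding is_dynamo_def by blast
qed

lemma is_dynamo_of_Diff:
  assumes "finite V" "\<And>u. {u, u} \<notin> E" "w \<in> V" "is_dynamo (V - {w}) E \<tau> D"
    and "\<tau> w \<le> deg V E w"
  shows "is_dynamo V E \<tau> D"
proof -
  obtain k where k: "activated (V - {w}) E \<tau> D k = V - {w}" and D: "D \<subseteq> V - {w}"
    using assms(4) by (auto simp: is_dynamo_def)
  let ?A = "activated V E \<tau> D k"
  have A: "V - {w} \<subseteq> ?A"
    using activated_Diff_singleton[OF assms(1) k] by simp
  have "nbrs V E w \<subseteq> V - {w}"
    using assms(2) by (auto simp: nbrs_def)
  then have "nbrs V E w \<inter> ?A = nbrs V E w"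
    using A by blast
  then have "w \<in> activated V E \<tau> D (Suc k)"
    using assms(3,5) by (simp add: deg_def)
  moreover have "activated V E \<tau> D (Suc k) \<subseteq> V"
    using activated_subset[of D V] D by auto
  ultimately have "activated V E \<tau> D (Suc k) = V"
    using A activated_mono[of k "Suc k" V E \<tau> D] by auto
  then show ?thesis
    using D unfolding is_dynamo_def by blast
qed

definition threshold_weight :: "('a \<Rightarrow> nat) \<Rightarrow> 'a \<Rightarrow> nat \<Rightarrow> real" where
  "threshold_weight \<tau> u d = real (min (\<tau> u) (d + 1)) / real (d + 1)"

definition potential :: "'a set \<Rightarrow> 'a set set \<Rightarrow> ('a \<Rightarrow> nat) \<Rightarrow> real" where
  "potential V E \<tau> = (\<Sum>u\<in>V. threshold_weight \<tau> u (deg V E u))"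

lemma threshold_weight_eq: "\<tau> u \<le> d \<Longrightarrow> threshold_weight \<tau> u d = real (\<tau> u) / (real d + 1)"
  by (simp add: threshold_weight_def)

text \<open>The weight at degree d plus d times the loss of one neighbour is the indicator of \<tau> u > d;
  this is what makes the potential drops sum to the number of unreachable vertices.\<close>
lemma threshold_weight_telescope:
  "threshold_weight \<tau> u d + real d * (threshold_weight \<tau> u d - threshold_weight \<tau> u (d - 1))
     = (if \<tau> u > d then 1 else 0)"
proof (cases "d = 0")
  case True
  then show ?thesis by (auto simp: threshold_weight_def)
next
  case False
  then have "real d * threshold_weight \<tau> u (d - 1) = real (min (\<tau> u) d)"
    by (simp add: threshold_weight_def)
  moreover have "(real d + 1) * threshold_weight \<tau> u d = real (min (\<tau> u) (d + 1))"
    by (simp add: threshold_weight_def add.commute)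
  ultimately show ?thesis by (auto simp: algebra_simps min_def)
qed

lemma nbrs_eq: "nbrs V E u = {w \<in> V. {u, w} \<in> E}"
  by (auto simp: nbrs_def insert_commute)

lemma deg_Diff_singleton:
  assumes "finite V" "u \<noteq> w"
  shows "deg (V - {w}) E u = deg V E u - (if w \<in> V \<and> {u, w} \<in> E then 1 else 0)"
proof -
  have "nbrs (V - {w}) E u = nbrs V E u - {w}"
    by (auto simp: nbrs_def)
  moreover have "finite (nbrs V E u)"
    using assms by (auto simp: nbrs_def)
  ultimately show ?thesis
    unfolding deg_def by (auto simp: nbrs_eq)
qed

lemma potential_Diff_singleton:
  fixes \<tau> :: "'a \<Rightarrow> nat"
  assumes "finite V" "\<And>u. {u, u} \<notin> E" "w \<in> V"
  defines "loss \<equiv> \<lambda>u. threshold_weight \<tau> u (deg V E u) - threshold_weight \<tau> u (deg V E u - 1)"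
  shows "potential V E \<tau> - potential (V - {w}) E \<tau>
           = threshold_weight \<tau> w (deg V E w) + (\<Sum>u\<in>V. if {u, w} \<in> E then loss u else 0)"
proof -
  have "potential (V - {w}) E \<tau>
          = (\<Sum>u\<in>V - {w}. threshold_weight \<tau> u (deg V E u) - (if {u, w} \<in> E then loss u else 0))"
    unfolding potential_def loss_def
    by (rule sum.cong) (auto simp: deg_Diff_singleton[OF assms(1)] assms(3))
  also have "\<dots> = potential V E \<tau> - threshold_weight \<tau> w (deg V E w)
                   - (\<Sum>u\<in>V. if {u, w} \<in> E then loss u else 0)"
    using assms(1-3) by (simp add: sum_subtractf potential_def sum_diff1)
  finally show ?thesis by simp
qed

lemma sum_potential_drop:
  assumes "finite V" "\<And>u. {u, u} \<notin> E"
  shows "(\<Sum>w\<in>V. potential V E \<tau> - potential (V - {w}) E \<tau>)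
           = (\<Sum>w\<in>V. if \<tau> w > deg V E w then 1 else 0)"
proof -
  define loss where
    "loss u = threshold_weight \<tau> u (deg V E u) - threshold_weight \<tau> u (deg V E u - 1)" for u
  have edges: "(\<Sum>w\<in>V. if {u, w} \<in> E then loss u else 0) = real (deg V E u) * loss u" for u
  proof -
    have "(\<Sum>w\<in>V. if {u, w} \<in> E then loss u else 0) = (\<Sum>w\<in>{w \<in> V. {u, w} \<in> E}. loss u)"
      using assms(1) by (rule sum.inter_filter[symmetric])
    also have "\<dots> = real (deg V E u) * loss u"
      by (simp add: deg_def nbrs_eq)
    finally show ?thesis .
  qed
  have "(\<Sum>w\<in>V. potential V E \<tau> - potential (V - {w}) E \<tau>)
          = (\<Sum>w\<in>V. threshold_weight \<tau> w (deg V E w) + (\<Sum>u\<in>V. if {u, w} \<in> E then loss u else 0))"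
    using potential_Diff_singleton[OF assms] unfolding loss_def by (intro sum.cong) auto
  also have "\<dots> = (\<Sum>w\<in>V. threshold_weight \<tau> w (deg V E w))
                   + (\<Sum>u\<in>V. \<Sum>w\<in>V. if {u, w} \<in> E then loss u else 0)"
    unfolding sum.distrib by (subst sum.swap) (rule refl)
  also have "\<dots> = (\<Sum>u\<in>V. threshold_weight \<tau> u (deg V E u) + real (deg V E u) * loss u)"
    by (simp only: edges sum.distrib)
  also have "\<dots> = (\<Sum>w\<in>V. if \<tau> w > deg V E w then 1 else 0)"
    unfolding loss_def threshold_weight_telescope ..
  finally show ?thesis .
qed

lemma exists_vertex_potential_drop:
  assumes "finite V" "\<And>u. {u, u} \<notin> E" "V \<noteq> {}"
  shows "\<exists>w\<in>V. potential (V - {w}) E \<tau> + (if \<tau> w > deg V E w then 1 else 0) \<le> potential V E \<tau>"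
proof (rule ccontr)
  assume "\<not> ?thesis"
  then have "(\<Sum>w\<in>V. potential V E \<tau> - potential (V - {w}) E \<tau>)
               < (\<Sum>w\<in>V. if \<tau> w > deg V E w then 1 else 0)"
    using assms(1,3) by (intro sum_strict_mono) auto
  then show False
    using sum_potential_drop[OF assms(1,2)] by simp
qed

lemma exists_dynamo_card_le_potential:
  assumes "finite V" "\<And>u. {u, u} \<notin> E"
  shows "\<exists>D. is_dynamo V E \<tau> D \<and> real (card D) \<le> potential V E \<tau>"
  using assms(1)
proof (induction "card V" arbitrary: V rule: less_induct)
  case less
  show ?case
  proof (cases "V = {}")
    case True
    then show ?thesis by (auto simp: is_dynamo_def potential_def intro!: exI[of _ 0])
  next
    case False
    obtain w where w: "w \<in> V" and drop:
        "potential (V - {w}) E \<tau> + (if \<tau> w > deg V E w then 1 else 0) \<le> potential V E \<tau>"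
      using exists_vertex_potential_drop[OF less.prems assms(2) False] by blast
    have "card (V - {w}) < card V"
      using w less.prems by (meson card_Diff1_less)
    then obtain D where D: "is_dynamo (V - {w}) E \<tau> D" "real (card D) \<le> potential (V - {w}) E \<tau>"
      using less.hyps less.prems by blast
    show ?thesis
    proof (cases "\<tau> w \<le> deg V E w")
      case True
      then show ?thesis
        using is_dynamo_of_Diff[OF less.prems assms(2) w D(1)] D(2) drop by auto
    next
      case False
      have "finite D"
        using D(1) less.prems by (auto simp: is_dynamo_def finite_subset)
      then have "card (insert w D) \<le> card D + 1"
        by (simp add: card_insert_if)
      then show ?thesis
        using is_dynamo_insert_Diff[OF less.prems w D(1)] D(2) drop False
        by (intro exI[of _ "insert w D"]) auto
    qed
  qed
qed

lemma dyn_le_card: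
  assumes "finite V" "is_dynamo V E \<tau> D"
  shows "dyn V E \<tau> \<le> card D"
proof -
  have "{card D | D. is_dynamo V E \<tau> D} \<subseteq> card ` Pow V"
    by (auto simp: is_dynamo_def)
  then have "finite {card D | D. is_dynamo V E \<tau> D}"
    using assms(1) by (meson finite_subset finite_imageI finite_Pow_iff)
  then show ?thesis
    unfolding dyn_def using assms(2) by (intro Min_le) auto
qed

lemma dyn_le_card_vertices: "finite V \<Longrightarrow> dyn V E \<tau> \<le> card V"
  by (rule dyn_le_card) (auto simp: is_dynamo_def intro: exI[of _ 0])

lemma div_Suc_le_tangent:
  fixes x c :: real
  assumes "c > 0" "x \<ge> 0"
  shows "x / (x + 1) \<le> c / (c + 1) + (x - c) / (c + 1)\<^sup>2"
proof -
  have "(c\<^sup>2 + x) * (x + 1) - x * (c + 1)\<^sup>2 = (x - c)\<^sup>2"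
    by (simp add: power2_eq_square algebra_simps)
  then have "x * (c + 1)\<^sup>2 \<le> (c\<^sup>2 + x) * (x + 1)"
    by (smt (verit) zero_le_power2)
  then have "x / (x + 1) \<le> (c\<^sup>2 + x) / (c + 1)\<^sup>2"
    using assms by (simp add: divide_le_eq le_divide_eq mult.commute)
  also have "(c\<^sup>2 + x) / (c + 1)\<^sup>2 = (c * (c + 1) + (x - c)) / (c + 1)\<^sup>2"
    by (simp add: power2_eq_square algebra_simps)
  also have "\<dots> = c / (c + 1) + (x - c) / (c + 1)\<^sup>2"
    using assms by (simp add: add_divide_distrib power2_eq_square)
  finally show ?thesis .
qed

lemma dyn_less_of_threshold_sum_less:
  assumes "finite V" "\<And>u. {u, u} \<notin> E" "c > 0"
    and "\<forall>v\<in>V. \<tau> v \<le> deg V E v"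
    and "(\<Sum>v\<in>V. real (\<tau> v)) < c * real (card V)"
  shows "real (dyn V E \<tau>) < c / (c + 1) * real (card V)"
proof -
  obtain D where D: "is_dynamo V E \<tau> D" "real (card D) \<le> potential V E \<tau>"
    using exists_dynamo_card_le_potential[OF assms(1,2)] by blast
  have weight_le: "threshold_weight \<tau> v (deg V E v) \<le> c / (c + 1) + (real (\<tau> v) - c) / (c + 1)\<^sup>2"
    if "v \<in> V" for v
  proof -
    have "threshold_weight \<tau> v (deg V E v) = real (\<tau> v) / (real (deg V E v) + 1)"
      using assms(4) that by (simp add: threshold_weight_eq)
    also have "\<dots> \<le> real (\<tau> v) / (real (\<tau> v) + 1)"
      using assms(4) that by (intro divide_left_mono) auto
    also have "\<dots> \<le> c / (c + 1) + (real (\<tau> v) - c) / (c + 1)\<^sup>2"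
      using div_Suc_le_tangent[OF assms(3)] by simp
    finally show ?thesis .
  qed
  have "real (dyn V E \<tau>) \<le> potential V E \<tau>"
    using dyn_le_card[OF assms(1) D(1)] D(2) by linarith
  also have "\<dots> \<le> (\<Sum>v\<in>V. c / (c + 1) + (real (\<tau> v) - c) / (c + 1)\<^sup>2)"
    unfolding potential_def using weight_le by (rule sum_mono)
  also have "\<dots> = c / (c + 1) * real (card V) + ((\<Sum>v\<in>V. real (\<tau> v)) - c * real (card V)) / (c + 1)\<^sup>2"
    by (simp add: sum.distrib sum_subtractf sum_divide_distrib[symmetric] algebra_simps)
  also have "\<dots> < c / (c + 1) * real (card V)"
    using assms(3,5) by (simp add: divide_neg_pos)
  finally show ?thesis .
qed

lemma card_edges_le:
  assumes "simple_graph V E"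
  shows "card E \<le> card V * card V - card V"
proof -
  have fin: "finite V"
    using assms by (simp add: simple_graph_def)
  let ?P = "V \<times> V - (\<lambda>u. (u, u)) ` V"
  have "E \<subseteq> (\<lambda>(u, v). {u, v}) ` ?P"
    using assms unfolding simple_graph_def by fastforce
  then have "card E \<le> card ?P"
    using fin by (meson card_image_le card_mono finite_Diff finite_SigmaI finite_imageI order_trans)
  also have "card ?P = card V * card V - card V"
    using fin by (subst card_Diff_subset) (auto simp: card_image inj_on_def card_cartesian_product)
  finally show ?thesis .
qed

lemma eps_le_card_minus_one:
  assumes "simple_graph V E" "card V > 0"
  shows "eps V E \<le> real (card V) - 1"
proof -
  have "real (card E) \<le> real (card V) * real (card V) - real (card V)"
    using card_edges_le[OF assms(1)] le_square[of "card V"]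
    by (metis of_nat_diff of_nat_le_iff of_nat_mult)
  then have "eps V E \<le> (real (card V) * real (card V) - real (card V)) / real (card V)"
    unfolding eps_def by (rule divide_right_mono) simp
  then show ?thesis
    using assms(2) by (simp add: diff_divide_distrib)
qed

lemma Ldyn_attained:
  assumes "finite V" "t \<ge> 0"
  shows "\<exists>\<tau>. (\<forall>v\<in>V. \<tau> v \<le> deg V E v) \<and> (\<Sum>v\<in>V. real (\<tau> v)) / real (card V) \<le> t
              \<and> Ldyn V E t = dyn V E \<tau>"
proof -
  let ?S = "{dyn V E \<tau> | \<tau>. (\<forall>v\<in>V. \<tau> v \<le> deg V E v) \<and> (\<Sum>v\<in>V. real (\<tau> v)) / real (card V) \<le> t}"
  have "dyn V E (\<lambda>_. 0) \<in> ?S"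
    using assms(2) by auto
  moreover have "?S \<subseteq> {..card V}"
    using dyn_le_card_vertices[OF assms(1)] by auto
  ultimately have "Ldyn V E t \<in> ?S"
    unfolding Ldyn_def by (intro Max_in) (auto intro: finite_subset)
  then show ?thesis by blast
qed

theorem proposition4:
  fixes V :: "'a set" and E :: "'a set set" and c t :: real
  assumes "simple_graph V E"
    and "c > 0" and "t > 0"
    and "t \<le> c * eps V E / real (card V)"
  shows "real (Ldyn V E t) < c / (c + 1) * real (card V)"
proof -
  have fin: "finite V" and loopless: "\<And>u. {u, u} \<notin> E"
    using assms(1) unfolding simple_graph_def by (auto simp: doubleton_eq_iff)
  have N: "card V > 0"
    using assms(3,4) by (cases "card V = 0") (auto simp: eps_def)
  obtain \<tau> where \<tau>: "\<forall>v\<in>V. \<tau> v \<le> deg V E v" "(\<Sum>v\<in>V. real (\<tau> v)) / real (card V) \<le> t"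
    and Ldyn: "Ldyn V E t = dyn V E \<tau>"
    using Ldyn_attained[OF fin less_imp_le[OF assms(3)]] by blast
  have "(\<Sum>v\<in>V. real (\<tau> v)) \<le> t * real (card V)"
    using \<tau>(2) N by (simp add: divide_le_eq)
  also have "\<dots> \<le> c * eps V E"
    using assms(4) N by (simp add: field_simps)
  also have "\<dots> < c * real (card V)"
    using eps_le_card_minus_one[OF assms(1) N] assms(2) by simp
  finally show ?thesis
    using dyn_less_of_threshold_sum_less[OF fin loopless assms(2) \<tau>(1)] Ldyn by simp
qed

end
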